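(* Let $G=(V,E)$ be a (finite or infinite) graph, and let $L=\{L_v:v\in V\}\cup\{L_e:e\in E\}$ be a set of lists of positive integers such that $|L_v|\geq 2$ for every vertex $v$ and $|L_e|\geq 3$ for every edge $e$. Then there exists an $L$-weighting of $G$.
   Context: Graphs are simple and may be infinite. Each list is a finite subset of $\{1,\dots,k\}$ for some natural number $k$. A weighting of $G$ from $L$ is a function $\omega\colon V\cup E\to\mathbb{Z}_{>0}$ with $\omega(v)\in L_v$ for all $v\in V$ and $\omega(e)\in L_e$ for all $e\in E$. The weighted degree of a vertex $v$ is $s_\omega(v)=\sum_{w\in N(v)}\omega(vw)+\omega(v)$; if $v$ has infinite degree $\kappa$ this sum is the cardinal $\kappa$ (equal to the degree of $v$). An $L$-weighting of $G$ is a weighting $\omega$ from $L$ such that for every edge $uv$ of $G$, either $s_\omega(u)\neq s_\omega(v)$, or $u$ and $v$ have the same infinite degree. *)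

theory Defs
  imports Main "HOL-Library.Equipollence"
begin

definition simple_graph :: "'a set \<Rightarrow> 'a set set \<Rightarrow> bool" where
  "simple_graph V E \<longleftrightarrow> (\<forall>e\<in>E. \<exists>u v. u \<in> V \<and> v \<in> V \<and> u \<noteq> v \<and> e = {u, v})"

definition nbhd :: "'a set set \<Rightarrow> 'a \<Rightarrow> 'a set" where
  "nbhd E v = {w. {v, w} \<in> E}"

definition wdeg_fin :: "'a set set \<Rightarrow> ('a \<Rightarrow> nat) \<Rightarrow> ('a set \<Rightarrow> nat) \<Rightarrow> 'a \<Rightarrow> nat" where
  "wdeg_fin E wv we v = (\<Sum>w\<in>nbhd E v. we {v, w}) + wv v"

text \<open>The weighted degree s(v) is the natural number wdeg_fin if v has finite degree,
  and the cardinal |N(v)| otherwise. Cardinals are compared via equipollence;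
  a natural number never equals an infinite cardinal.\<close>
definition wdeg_differ :: "'a set set \<Rightarrow> ('a \<Rightarrow> nat) \<Rightarrow> ('a set \<Rightarrow> nat) \<Rightarrow> 'a \<Rightarrow> 'a \<Rightarrow> bool" where
  "wdeg_differ E wv we u v =
     (if finite (nbhd E u) \<and> finite (nbhd E v) then wdeg_fin E wv we u \<noteq> wdeg_fin E wv we v
      else if finite (nbhd E u) \<or> finite (nbhd E v) then True
      else \<not> (nbhd E u \<approx> nbhd E v))"

definition same_infinite_degree :: "'a set set \<Rightarrow> 'a \<Rightarrow> 'a \<Rightarrow> bool" where
  "same_infinite_degree E u v \<longleftrightarrow>
     infinite (nbhd E u) \<and> infinite (nbhd E v) \<and> nbhd E u \<approx> nbhd E v"

definition is_L_weighting ::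
  "'a set \<Rightarrow> 'a set set \<Rightarrow> ('a \<Rightarrow> nat set) \<Rightarrow> ('a set \<Rightarrow> nat set)
   \<Rightarrow> ('a \<Rightarrow> nat) \<Rightarrow> ('a set \<Rightarrow> nat) \<Rightarrow> bool" where
  "is_L_weighting V E Lv Le wv we \<longleftrightarrow>
     (\<forall>v\<in>V. wv v \<in> Lv v) \<and> (\<forall>e\<in>E. we e \<in> Le e) \<and>
     (\<forall>u v. {u, v} \<in> E \<longrightarrow> wdeg_differ E wv we u v \<or> same_infinite_degree E u v)"

end

(* Number the vertices injectively and write every edge e as {lo e, hi e} with lo e numbered
   below hi e. For a finite graph, the weighting is proper iff the product over all edges e of the
   linear forms s(hi e) - s(lo e) in the vertex and edge weights, s(v) being the weighted degree,
   is nonzero. By a permanent form of the Combinatorial Nullstellensatz, a nonzero value on the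
   grid of lists exists as soon as some matrix Lam, with at most one nonzero entry in each vertex
   row and at most two in each edge row, makes the permanent of (forms) * Lam nonzero. Column j of
   Lam is the edge j minus the next edge above j at lo j (or minus the vertex lo j if there is
   none); then the product matrix is 0 where hi f is below hi j and 1 where hi f = hi j, so its
   permanent counts the permutations preserving hi and is positive.
   An infinite graph only needs its edges between vertices of finite degree to be proper; each
   such constraint involves finitely many weights, so Tychonoff's theorem for the product of the
   finite discrete lists reduces it to finite subgraphs. *)
theory Submission
  imports Defs "HOL-Combinatorics.Permutations" "HOL-Analysis.Function_Topology"
begin

section \<open>Lagrange coefficients and the Combinatorial Nullstellensatz\<close>

definition lagrange_coeff :: "'a::field set \<Rightarrow> 'a \<Rightarrow> 'a" where
  "lagrange_coeff A a = inverse (\<Prod>b\<in>A - {a}. a - b)"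

lemma lagrange_coeff_remove:
  assumes "finite A" "c \<in> A" "a \<in> A" "a \<noteq> c"
  shows "(a - c) * lagrange_coeff A a = lagrange_coeff (A - {c}) a"
proof -
  have "A - {a} = insert c (A - {c} - {a})" using assms by auto
  then have "(\<Prod>b\<in>A - {a}. a - b) = (a - c) * (\<Prod>b\<in>A - {c} - {a}. a - b)"
    using assms by simp
  then show ?thesis using assms unfolding lagrange_coeff_def by (simp add: field_simps)
qed

lemma sum_power_lagrange_coeff_Suc:
  assumes "finite A" "c \<in> A"
  shows "(\<Sum>a\<in>A. a ^ Suc k * lagrange_coeff A a)
    = c * (\<Sum>a\<in>A. a ^ k * lagrange_coeff A a) + (\<Sum>a\<in>A - {c}. a ^ k * lagrange_coeff (A - {c}) a)"
proof -
  have "(\<Sum>a\<in>A. a ^ Suc k * lagrange_coeff A a) - c * (\<Sum>a\<in>A. a ^ k * lagrange_coeff A a)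
      = (\<Sum>a\<in>A. a ^ k * ((a - c) * lagrange_coeff A a))"
    by (simp add: sum_distrib_left sum_subtractf[symmetric] algebra_simps)
  also have "\<dots> = (\<Sum>a\<in>A - {c}. a ^ k * ((a - c) * lagrange_coeff A a))"
    using assms by (simp add: sum.remove)
  also have "\<dots> = (\<Sum>a\<in>A - {c}. a ^ k * lagrange_coeff (A - {c}) a)"
    using assms by (intro sum.cong) (auto simp: lagrange_coeff_remove)
  finally show ?thesis by (simp add: algebra_simps)
qed

text \<open>\<open>\<Sum>a\<in>A. p a * lagrange_coeff A a\<close> is the leading coefficient of the polynomial of degree
  \<open>< card A\<close> interpolating \<open>p\<close> on \<open>A\<close>.\<close>
lemma sum_power_lagrange_coeff:
  assumes "finite A" "card A = Suc n" "k \<le> n"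
  shows "(\<Sum>a\<in>A. a ^ k * lagrange_coeff A a) = (if k = n then 1 else 0)"
  using assms
proof (induction n arbitrary: A k)
  case 0
  then obtain a where "A = {a}" by (auto simp: card_Suc_eq)
  with 0 show ?case by (simp add: lagrange_coeff_def)
next
  case (Suc n)
  then have A: "finite A" by simp
  from Suc.prems obtain c where c: "c \<in> A" by (metis Zero_not_Suc card.empty ex_in_conv)
  with Suc.prems have "card (A - {c}) = Suc n" by simp
  then obtain d where "d \<in> A - {c}" by (metis Zero_not_Suc card.empty ex_in_conv)
  with c have cd: "c \<in> A" "d \<in> A" "c \<noteq> d" by auto
  have IH: "(\<Sum>a\<in>A - {b}. a ^ k * lagrange_coeff (A - {b}) a) = (if k = n then 1 else 0)"
    if "b \<in> A" "k \<le> n" for b k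
    using Suc that by simp
  let ?S = "\<lambda>k. \<Sum>a\<in>A. a ^ k * lagrange_coeff A a"
  have "c * ?S 0 = d * ?S 0"
    using sum_power_lagrange_coeff_Suc[OF A cd(1), of 0] sum_power_lagrange_coeff_Suc[OF A cd(2), of 0]
      IH[OF cd(1), of 0] IH[OF cd(2), of 0] by simp
  with cd have S0: "?S 0 = 0" by simp
  have "?S k = (if k = Suc n then 1 else 0)" if "k \<le> Suc n" for k
    using that
  proof (induction k)
    case 0
    with S0 show ?case by simp
  next
    case (Suc k)
    then have "?S k = 0" by simp
    with Suc.prems show ?case
      using sum_power_lagrange_coeff_Suc[OF A cd(1), of k] IH[OF cd(1), of k] by simp
  qed
  then show ?case using Suc.prems by blast
qed

definition fibre_card :: "'r set \<Rightarrow> ('r \<Rightarrow> 'z) \<Rightarrow> 'z \<Rightarrow> nat" where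
  "fibre_card R \<sigma> z = card {r\<in>R. \<sigma> r = z}"

lemma prod_fibre_card:
  fixes g :: "'z \<Rightarrow> 'c::comm_monoid_mult"
  assumes "finite R" "finite Z" "\<sigma> ` R \<subseteq> Z"
  shows "(\<Prod>r\<in>R. g (\<sigma> r)) = (\<Prod>z\<in>Z. g z ^ fibre_card R \<sigma> z)"
proof -
  have "(\<Prod>r\<in>R. g (\<sigma> r)) = (\<Prod>z\<in>Z. \<Prod>r\<in>{r\<in>R. \<sigma> r = z}. g (\<sigma> r))"
    using prod.group[OF assms, of "\<lambda>r. g (\<sigma> r)"] by simp
  also have "\<dots> = (\<Prod>z\<in>Z. g z ^ fibre_card R \<sigma> z)"
    by (intro prod.cong refl) (simp add: fibre_card_def)
  finally show ?thesis .
qed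

lemma sum_fibre_card:
  assumes "finite R" "finite Z" "\<sigma> ` R \<subseteq> Z"
  shows "(\<Sum>z\<in>Z. fibre_card R \<sigma> z) = card R"
  using sum.group[OF assms, of "\<lambda>r. 1::nat"] by (simp add: fibre_card_def)

lemma fibre_card_eq_iff:
  assumes "\<sigma> \<in> R \<rightarrow>\<^sub>E Z" "\<tau> \<in> R \<rightarrow>\<^sub>E Z"
  shows "fibre_card R \<sigma> = fibre_card R \<tau> \<longleftrightarrow> (\<forall>z\<in>Z. fibre_card R \<sigma> z = fibre_card R \<tau> z)"
proof -
  have "{r\<in>R. \<sigma> r = z} = {}" "{r\<in>R. \<tau> r = z} = {}" if "z \<notin> Z" for z
    using assms that by auto
  then show ?thesis unfolding fibre_card_def fun_eq_iff by metis
qed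

lemma prod_linear_forms_expand:
  fixes a :: "'r \<Rightarrow> 'z \<Rightarrow> 'a::comm_semiring_1"
  assumes "finite R" "finite Z"
  shows "(\<Prod>r\<in>R. \<Sum>z\<in>Z. a r z * x z)
    = (\<Sum>\<sigma>\<in>R \<rightarrow>\<^sub>E Z. (\<Prod>r\<in>R. a r (\<sigma> r)) * (\<Prod>z\<in>Z. x z ^ fibre_card R \<sigma> z))"
proof -
  have "(\<Prod>r\<in>R. \<Sum>z\<in>Z. a r z * x z) = (\<Sum>\<sigma>\<in>R \<rightarrow>\<^sub>E Z. \<Prod>r\<in>R. a r (\<sigma> r) * x (\<sigma> r))"
    using prod_sum_PiE[OF assms(1), of "\<lambda>_. Z" "\<lambda>r z. a r z * x z"] assms(2) by simp
  also have "\<dots> = (\<Sum>\<sigma>\<in>R \<rightarrow>\<^sub>E Z. (\<Prod>r\<in>R. a r (\<sigma> r)) * (\<Prod>z\<in>Z. x z ^ fibre_card R \<sigma> z))"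
  proof (intro sum.cong refl)
    fix \<sigma> assume "\<sigma> \<in> R \<rightarrow>\<^sub>E Z"
    then have "\<sigma> ` R \<subseteq> Z" by auto
    then show "(\<Prod>r\<in>R. a r (\<sigma> r) * x (\<sigma> r))
        = (\<Prod>r\<in>R. a r (\<sigma> r)) * (\<Prod>z\<in>Z. x z ^ fibre_card R \<sigma> z)"
      using prod_fibre_card[OF assms, of \<sigma> x] by (simp add: prod.distrib)
  qed
  finally show ?thesis .
qed

lemma grid_sum_monomial:
  fixes G :: "'z \<Rightarrow> 'a::field set"
  assumes Z: "finite Z"
    and G: "\<And>z. z \<in> Z \<Longrightarrow> finite (G z) \<and> card (G z) = Suc (\<eta> z)"
    and deg: "(\<Sum>z\<in>Z. m z) = (\<Sum>z\<in>Z. \<eta> z)"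
  shows "(\<Sum>x\<in>PiE Z G. (\<Prod>z\<in>Z. x z ^ m z) * (\<Prod>z\<in>Z. lagrange_coeff (G z) (x z)))
    = (if \<forall>z\<in>Z. m z = \<eta> z then 1 else 0)"
proof -
  have "(\<Sum>x\<in>PiE Z G. (\<Prod>z\<in>Z. x z ^ m z) * (\<Prod>z\<in>Z. lagrange_coeff (G z) (x z)))
      = (\<Prod>z\<in>Z. \<Sum>b\<in>G z. b ^ m z * lagrange_coeff (G z) b)"
    using prod_sum_PiE[OF Z, of G "\<lambda>z b. b ^ m z * lagrange_coeff (G z) b"] G
    by (simp add: prod.distrib)
  also have "\<dots> = (if \<forall>z\<in>Z. m z = \<eta> z then 1 else 0)"
  proof (cases "\<forall>z\<in>Z. m z = \<eta> z")
    case True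
    then have "(\<Sum>b\<in>G z. b ^ m z * lagrange_coeff (G z) b) = 1" if "z \<in> Z" for z
      using G[OF that] that by (simp add: sum_power_lagrange_coeff)
    with True show ?thesis by simp
  next
    case False
    have "\<exists>z\<in>Z. m z < \<eta> z"
    proof (rule ccontr)
      assume "\<not> (\<exists>z\<in>Z. m z < \<eta> z)"
      then have "\<forall>z\<in>Z. \<eta> z = m z"
        using sum_mono_inv[OF deg[symmetric] _ _ Z] by (meson not_less)
      with False show False by auto
    qed
    then obtain z where z: "z \<in> Z" "m z < \<eta> z" by blast
    then have "(\<Sum>b\<in>G z. b ^ m z * lagrange_coeff (G z) b) = 0"
      using G[OF z(1)] by (simp add: sum_power_lagrange_coeff)
    with z Z have "(\<Prod>z\<in>Z. \<Sum>b\<in>G z. b ^ m z * lagrange_coeff (G z) b) = 0"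
      by (intro prod_zero) auto
    with False show ?thesis by simp
  qed
  finally show ?thesis .
qed

text \<open>The right-hand side is the coefficient of \<open>\<Prod>z\<in>Z. x z ^ \<eta> z\<close> in the product of
  linear forms; this is the coefficient formula behind the Combinatorial Nullstellensatz.\<close>
lemma grid_sum_prod_linear_forms:
  fixes a :: "'r \<Rightarrow> 'z \<Rightarrow> 'a::field"
  assumes R: "finite R" and Z: "finite Z"
    and G: "\<And>z. z \<in> Z \<Longrightarrow> finite (G z) \<and> card (G z) = Suc (\<eta> z)"
    and deg: "(\<Sum>z\<in>Z. \<eta> z) = card R"
  shows "(\<Sum>x\<in>PiE Z G. (\<Prod>r\<in>R. \<Sum>z\<in>Z. a r z * x z) * (\<Prod>z\<in>Z. lagrange_coeff (G z) (x z)))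
    = (\<Sum>\<sigma>\<in>{\<sigma>\<in>R \<rightarrow>\<^sub>E Z. \<forall>z\<in>Z. fibre_card R \<sigma> z = \<eta> z}. \<Prod>r\<in>R. a r (\<sigma> r))"
proof -
  let ?lc = "\<lambda>x. \<Prod>z\<in>Z. lagrange_coeff (G z) (x z)"
  have "(\<Sum>x\<in>PiE Z G. (\<Prod>r\<in>R. \<Sum>z\<in>Z. a r z * x z) * ?lc x)
      = (\<Sum>x\<in>PiE Z G. \<Sum>\<sigma>\<in>R \<rightarrow>\<^sub>E Z.
           (\<Prod>r\<in>R. a r (\<sigma> r)) * ((\<Prod>z\<in>Z. x z ^ fibre_card R \<sigma> z) * ?lc x))"
    by (simp add: prod_linear_forms_expand[OF R Z] sum_distrib_right mult.assoc)
  also have "\<dots> = (\<Sum>\<sigma>\<in>R \<rightarrow>\<^sub>E Z. (\<Prod>r\<in>R. a r (\<sigma> r)) *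
      (\<Sum>x\<in>PiE Z G. (\<Prod>z\<in>Z. x z ^ fibre_card R \<sigma> z) * ?lc x))"
    by (subst sum.swap) (simp add: sum_distrib_left)
  also have "\<dots> = (\<Sum>\<sigma>\<in>R \<rightarrow>\<^sub>E Z.
      if \<forall>z\<in>Z. fibre_card R \<sigma> z = \<eta> z then \<Prod>r\<in>R. a r (\<sigma> r) else 0)"
  proof (intro sum.cong refl)
    fix \<sigma> assume "\<sigma> \<in> R \<rightarrow>\<^sub>E Z"
    then have "(\<Sum>z\<in>Z. fibre_card R \<sigma> z) = (\<Sum>z\<in>Z. \<eta> z)"
      using sum_fibre_card[OF R Z] deg by auto
    then show "(\<Prod>r\<in>R. a r (\<sigma> r)) * (\<Sum>x\<in>PiE Z G. (\<Prod>z\<in>Z. x z ^ fibre_card R \<sigma> z) * ?lc x)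
        = (if \<forall>z\<in>Z. fibre_card R \<sigma> z = \<eta> z then \<Prod>r\<in>R. a r (\<sigma> r) else 0)"
      by (simp add: grid_sum_monomial[OF Z G])
  qed
  also have "\<dots> = (\<Sum>\<sigma>\<in>{\<sigma>\<in>R \<rightarrow>\<^sub>E Z. \<forall>z\<in>Z. fibre_card R \<sigma> z = \<eta> z}. \<Prod>r\<in>R. a r (\<sigma> r))"
    using R Z by (simp add: sum.inter_filter finite_PiE)
  finally show ?thesis .
qed

lemma coefficient_eq_0_if_vanishes_on_grid:
  fixes a :: "'r \<Rightarrow> 'z \<Rightarrow> 'a::field"
  assumes R: "finite R" and Z: "finite Z"
    and L: "\<And>z. z \<in> Z \<Longrightarrow> finite (L z) \<and> \<eta> z < card (L z)"
    and deg: "(\<Sum>z\<in>Z. \<eta> z) = card R"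
    and vanish: "\<And>x. x \<in> PiE Z L \<Longrightarrow> (\<Prod>r\<in>R. \<Sum>z\<in>Z. a r z * x z) = 0"
  shows "(\<Sum>\<sigma>\<in>{\<sigma>\<in>R \<rightarrow>\<^sub>E Z. \<forall>z\<in>Z. fibre_card R \<sigma> z = \<eta> z}. \<Prod>r\<in>R. a r (\<sigma> r)) = 0"
proof -
  have "\<exists>T. T \<subseteq> L z \<and> card T = Suc (\<eta> z) \<and> finite T" if "z \<in> Z" for z
    using L[OF that] by (meson Suc_leI obtain_subset_with_card_n)
  then obtain G where G: "\<And>z. z \<in> Z \<Longrightarrow> G z \<subseteq> L z \<and> card (G z) = Suc (\<eta> z) \<and> finite (G z)"
    by metis
  have "PiE Z G \<subseteq> PiE Z L" using G by (auto simp: PiE_def Pi_def)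
  then have "(\<Sum>x\<in>PiE Z G. (\<Prod>r\<in>R. \<Sum>z\<in>Z. a r z * x z) * (\<Prod>z\<in>Z. lagrange_coeff (G z) (x z))) = 0"
    using vanish by (intro sum.neutral) auto
  moreover have "(\<Sum>x\<in>PiE Z G. (\<Prod>r\<in>R. \<Sum>z\<in>Z. a r z * x z) * (\<Prod>z\<in>Z. lagrange_coeff (G z) (x z)))
      = (\<Sum>\<sigma>\<in>{\<sigma>\<in>R \<rightarrow>\<^sub>E Z. \<forall>z\<in>Z. fibre_card R \<sigma> z = \<eta> z}. \<Prod>r\<in>R. a r (\<sigma> r))"
    using G by (intro grid_sum_prod_linear_forms[OF R Z _ deg]) auto
  ultimately show ?thesis by simp
qed

section \<open>Permanents\<close>

definition permanent :: "'r set \<Rightarrow> ('r \<Rightarrow> 'r \<Rightarrow> 'a::comm_semiring_1) \<Rightarrow> 'a" where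
  "permanent R M = (\<Sum>\<pi>\<in>{\<pi>. \<pi> permutes R}. \<Prod>r\<in>R. M r (\<pi> r))"

lemma permanent_permute_rows:
  assumes \<tau>: "\<tau> permutes R"
  shows "permanent R (\<lambda>r. M (\<tau> r)) = permanent R M"
proof -
  have "(\<Prod>r\<in>R. M (\<tau> r) ((\<pi> \<circ> \<tau>) r)) = (\<Prod>r\<in>R. M r (\<pi> r))" for \<pi>
    using prod.permute[OF \<tau>, of "\<lambda>r. M r (\<pi> r)"] by (simp add: o_def)
  then show ?thesis
    unfolding permanent_def by (subst sum_permutations_compose_right[OF \<tau>]) simp
qed

lemma obtain_permutes_same_fibres:
  assumes R: "finite R" and fibres: "fibre_card R \<sigma> = fibre_card R \<sigma>'"
  obtains \<tau> where "\<tau> permutes R" "\<And>r. r \<in> R \<Longrightarrow> \<sigma>' r = \<sigma> (\<tau> r)"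
proof -
  have "\<exists>h. bij_betw h {r\<in>R. \<sigma>' r = z} {r\<in>R. \<sigma> r = z}" for z
    using fun_cong[OF fibres, of z] R unfolding fibre_card_def
    by (intro finite_same_card_bij) auto
  then obtain b where b: "\<And>z. bij_betw (b z) {r\<in>R. \<sigma>' r = z} {r\<in>R. \<sigma> r = z}" by metis
  define \<tau> where "\<tau> r = (if r \<in> R then b (\<sigma>' r) r else r)" for r
  have img: "\<tau> r \<in> R \<and> \<sigma> (\<tau> r) = \<sigma>' r" if "r \<in> R" for r
    using bij_betw_apply[OF b[of "\<sigma>' r"]] that by (auto simp: \<tau>_def)
  have "inj_on \<tau> R"
  proof (rule inj_onI)
    fix r1 r2 assume r: "r1 \<in> R" "r2 \<in> R" "\<tau> r1 = \<tau> r2"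
    then have z: "\<sigma>' r1 = \<sigma>' r2" using img by metis
    with r have "b (\<sigma>' r1) r1 = b (\<sigma>' r1) r2" by (simp add: \<tau>_def)
    with r z show "r1 = r2"
      using bij_betw_imp_inj_on[OF b[of "\<sigma>' r1"]] by (auto dest: inj_onD)
  qed
  moreover from this have "\<tau> ` R = R" using endo_inj_surj[OF R] img by auto
  ultimately have "\<tau> permutes R"
    by (intro bij_imp_permutes) (auto simp: bij_betw_def \<tau>_def)
  with img that show ?thesis by metis
qed

lemma permanent_eq_if_same_fibres:
  assumes "finite R" "fibre_card R \<sigma> = fibre_card R \<sigma>'"
  shows "permanent R (\<lambda>r. M (\<sigma>' r)) = permanent R (\<lambda>r. M (\<sigma> r))"
proof -
  obtain \<tau> where \<tau>: "\<tau> permutes R" "\<And>r. r \<in> R \<Longrightarrow> \<sigma>' r = \<sigma> (\<tau> r)"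
    using obtain_permutes_same_fibres[OF assms] by metis
  then have "permanent R (\<lambda>r. M (\<sigma>' r)) = permanent R (\<lambda>r. M (\<sigma> (\<tau> r)))"
    unfolding permanent_def by (intro sum.cong prod.cong) auto
  also have "\<dots> = permanent R (\<lambda>r. M (\<sigma> r))"
    by (rule permanent_permute_rows[OF \<tau>(1)])
  finally show ?thesis .
qed

text \<open>The easy half of the Frobenius--Koenig theorem.\<close>
lemma permanent_eq_0_if_rows_supported_small:
  assumes R: "finite R" and F: "F \<subseteq> R" and S: "finite S" "card S < card F"
    and supp: "\<And>r j. r \<in> F \<Longrightarrow> j \<in> R \<Longrightarrow> M r j \<noteq> 0 \<Longrightarrow> j \<in> S"
  shows "permanent R M = 0"
  unfolding permanent_def
proof (intro sum.neutral ballI)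
  fix \<pi> assume "\<pi> \<in> {\<pi>. \<pi> permutes R}"
  then have \<pi>: "\<pi> permutes R" by simp
  have "card (\<pi> ` F) = card F"
    using permutes_inj_on[OF \<pi>] F by (intro card_image) (auto intro: inj_on_subset)
  with S have "\<not> \<pi> ` F \<subseteq> S" by (metis card_mono not_le)
  then obtain r where "r \<in> F" "\<pi> r \<notin> S" by blast
  with F supp permutes_in_image[OF \<pi>] have "r \<in> R" "M r (\<pi> r) = 0" by auto
  with R show "(\<Prod>r\<in>R. M r (\<pi> r)) = 0" by (intro prod_zero) auto
qed

lemma permanent_eq_0_if_fibre_exceeds_support:
  assumes "finite R" "card {j\<in>R. \<Lambda> z j \<noteq> 0} < fibre_card R \<sigma> z"
  shows "permanent R (\<lambda>r. \<Lambda> (\<sigma> r)) = 0"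
  using assms unfolding fibre_card_def
  by (intro permanent_eq_0_if_rows_supported_small[of R "{r\<in>R. \<sigma> r = z}" "{j\<in>R. \<Lambda> z j \<noteq> 0}"])
    auto

lemma permanent_mult_expand:
  fixes A :: "'r \<Rightarrow> 'z \<Rightarrow> 'a::comm_semiring_1"
  assumes "finite R" "finite Z"
  shows "permanent R (\<lambda>r j. \<Sum>z\<in>Z. A r z * \<Lambda> z j)
    = (\<Sum>\<sigma>\<in>R \<rightarrow>\<^sub>E Z. (\<Prod>r\<in>R. A r (\<sigma> r)) * permanent R (\<lambda>r. \<Lambda> (\<sigma> r)))"
proof -
  have "permanent R (\<lambda>r j. \<Sum>z\<in>Z. A r z * \<Lambda> z j)
      = (\<Sum>\<pi>\<in>{\<pi>. \<pi> permutes R}. \<Sum>\<sigma>\<in>R \<rightarrow>\<^sub>E Z. \<Prod>r\<in>R. A r (\<sigma> r) * \<Lambda> (\<sigma> r) (\<pi> r))"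
    unfolding permanent_def by (intro sum.cong refl prod_sum_PiE) (use assms in auto)
  also have "\<dots> = (\<Sum>\<sigma>\<in>R \<rightarrow>\<^sub>E Z. (\<Prod>r\<in>R. A r (\<sigma> r)) * permanent R (\<lambda>r. \<Lambda> (\<sigma> r)))"
    by (subst sum.swap) (simp add: permanent_def prod.distrib sum_distrib_left)
  finally show ?thesis .
qed

lemma sum_fibre_class_permanent:
  assumes R: "finite R" and \<sigma>0: "\<sigma>0 \<in> R \<rightarrow>\<^sub>E Z"
  shows "(\<Sum>\<sigma>\<in>{\<sigma>\<in>R \<rightarrow>\<^sub>E Z. fibre_card R \<sigma> = fibre_card R \<sigma>0}. C \<sigma> * permanent R (\<lambda>r. \<Lambda> (\<sigma> r)))
    = (\<Sum>\<sigma>\<in>{\<sigma>\<in>R \<rightarrow>\<^sub>E Z. \<forall>z\<in>Z. fibre_card R \<sigma> z = fibre_card R \<sigma>0 z}. C \<sigma>)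
      * permanent R (\<lambda>r. \<Lambda> (\<sigma>0 r))"
proof -
  let ?F = "{\<sigma>\<in>R \<rightarrow>\<^sub>E Z. fibre_card R \<sigma> = fibre_card R \<sigma>0}"
  have "(\<Sum>\<sigma>\<in>?F. C \<sigma> * permanent R (\<lambda>r. \<Lambda> (\<sigma> r))) = (\<Sum>\<sigma>\<in>?F. C \<sigma> * permanent R (\<lambda>r. \<Lambda> (\<sigma>0 r)))"
  proof (intro sum.cong refl)
    fix \<sigma> assume "\<sigma> \<in> ?F"
    then have "fibre_card R \<sigma>0 = fibre_card R \<sigma>" by simp
    from permanent_eq_if_same_fibres[OF R this, of \<Lambda>]
    show "C \<sigma> * permanent R (\<lambda>r. \<Lambda> (\<sigma> r)) = C \<sigma> * permanent R (\<lambda>r. \<Lambda> (\<sigma>0 r))" by simp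
  qed
  also have "\<dots> = (\<Sum>\<sigma>\<in>{\<sigma>\<in>R \<rightarrow>\<^sub>E Z. \<forall>z\<in>Z. fibre_card R \<sigma> z = fibre_card R \<sigma>0 z}. C \<sigma>)
      * permanent R (\<lambda>r. \<Lambda> (\<sigma>0 r))"
    unfolding sum_distrib_right
    by (intro sum.cong refl) (use fibre_card_eq_iff[OF _ \<sigma>0] in blast)
  finally show ?thesis .
qed

text \<open>A permanent form of the Combinatorial Nullstellensatz. Grouping the expansion of the
  permanent by fibres, each group is a coefficient of the product of the linear forms times a
  common permanent, and one of the two factors vanishes.\<close>
lemma permanent_eq_0_if_vanishes_on_grid:
  fixes A :: "'r \<Rightarrow> 'z \<Rightarrow> 'a::field"
  assumes R: "finite R" and Z: "finite Z"
    and L: "\<And>z. z \<in> Z \<Longrightarrow> finite (L z) \<and> card {j\<in>R. \<Lambda> z j \<noteq> 0} < card (L z)"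
    and vanish: "\<And>x. x \<in> PiE Z L \<Longrightarrow> (\<Prod>r\<in>R. \<Sum>z\<in>Z. A r z * x z) = 0"
  shows "permanent R (\<lambda>r j. \<Sum>z\<in>Z. A r z * \<Lambda> z j) = 0"
proof -
  let ?S = "R \<rightarrow>\<^sub>E Z"
  let ?C = "\<lambda>\<sigma>. \<Prod>r\<in>R. A r (\<sigma> r)"
  let ?P = "\<lambda>\<sigma>. permanent R (\<lambda>r. \<Lambda> (\<sigma> r))"
  have finS: "finite ?S" using R Z by (simp add: finite_PiE)
  have fibre_group_0: "(\<Sum>\<sigma>\<in>{\<sigma>\<in>?S. fibre_card R \<sigma> = fibre_card R \<sigma>0}. ?C \<sigma> * ?P \<sigma>) = 0"
    if \<sigma>0: "\<sigma>0 \<in> ?S" for \<sigma>0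
  proof (cases "\<exists>z\<in>Z. card {j\<in>R. \<Lambda> z j \<noteq> 0} < fibre_card R \<sigma>0 z")
    case True
    then obtain z where z: "card {j\<in>R. \<Lambda> z j \<noteq> 0} < fibre_card R \<sigma>0 z" by blast
    have "?P \<sigma> = 0" if fibre: "fibre_card R \<sigma> = fibre_card R \<sigma>0" for \<sigma>
      using permanent_eq_0_if_fibre_exceeds_support[where \<Lambda> = \<Lambda> and \<sigma> = \<sigma>, OF R z[folded fibre]] .
    then show ?thesis by (intro sum.neutral ballI) simp
  next
    case False
    have "(\<Sum>\<sigma>\<in>{\<sigma>\<in>?S. \<forall>z\<in>Z. fibre_card R \<sigma> z = fibre_card R \<sigma>0 z}. ?C \<sigma>) = 0"
    proof (rule coefficient_eq_0_if_vanishes_on_grid[OF R Z _ _ vanish])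
      show "finite (L z) \<and> fibre_card R \<sigma>0 z < card (L z)" if "z \<in> Z" for z
        using False L[OF that] that by force
      show "(\<Sum>z\<in>Z. fibre_card R \<sigma>0 z) = card R"
        using \<sigma>0 by (intro sum_fibre_card[OF R Z]) auto
    qed
    then show ?thesis
      by (simp add: sum_fibre_class_permanent[OF R \<sigma>0, where C = "\<lambda>\<sigma>. \<Prod>r\<in>R. A r (\<sigma> r)"])
  qed
  have "(\<Sum>\<eta>\<in>fibre_card R ` ?S. \<Sum>\<sigma>\<in>{\<sigma>\<in>?S. fibre_card R \<sigma> = \<eta>}. ?C \<sigma> * ?P \<sigma>) = 0"
    using fibre_group_0 by (intro sum.neutral) blast
  moreover have "(\<Sum>\<eta>\<in>fibre_card R ` ?S. \<Sum>\<sigma>\<in>{\<sigma>\<in>?S. fibre_card R \<sigma> = \<eta>}. ?C \<sigma> * ?P \<sigma>)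
      = (\<Sum>\<sigma>\<in>?S. ?C \<sigma> * ?P \<sigma>)"
    by (rule sum.group[OF finS finite_imageI[OF finS] subset_refl])
  ultimately show ?thesis by (simp only: permanent_mult_expand[OF R Z])
qed

lemma simple_graph_edgeE:
  assumes "simple_graph V E" "e \<in> E"
  obtains u v where "u \<in> V" "v \<in> V" "u \<noteq> v" "e = {u, v}"
  using assms unfolding simple_graph_def by blast

lemma simple_graph_edgeD:
  assumes "simple_graph V E" "{u, v} \<in> E"
  shows "u \<in> V \<and> v \<in> V \<and> u \<noteq> v"
  using assms by (auto elim!: simple_graph_edgeE simp: doubleton_eq_iff)

lemma incident_edges_eq_image_nbhd:
  assumes "simple_graph V E"
  shows "{g\<in>E. v \<in> g} = (\<lambda>w. {v, w}) ` nbhd E v"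
proof (intro set_eqI iffI)
  fix g assume g: "g \<in> {g\<in>E. v \<in> g}"
  then obtain a b where "g = {a, b}" using assms by (blast elim: simple_graph_edgeE)
  with g have "g = {v, if v = a then b else a}" by auto
  with g show "g \<in> (\<lambda>w. {v, w}) ` nbhd E v" by (auto simp: nbhd_def)
qed (auto simp: nbhd_def)

lemma inj_on_nbhd_edge:
  assumes "simple_graph V E"
  shows "inj_on (\<lambda>w. {v, w}) (nbhd E v)"
  using simple_graph_edgeD[OF assms] by (auto intro!: inj_onI simp: nbhd_def doubleton_eq_iff)

lemma wdeg_fin_eq_sum_incident:
  assumes "simple_graph V E"
  shows "wdeg_fin E wv we v = (\<Sum>g\<in>{g\<in>E. v \<in> g}. we g) + wv v"
  unfolding wdeg_fin_def incident_edges_eq_image_nbhd[OF assms]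
  by (simp add: sum.reindex[OF inj_on_nbhd_edge[OF assms]])

lemma finite_incident_edges:
  assumes "simple_graph V E" "finite (nbhd E v)"
  shows "finite {g\<in>E. v \<in> g}"
  using assms by (simp add: incident_edges_eq_image_nbhd)

section \<open>Finite graphs\<close>

locale ordered_graph =
  fixes V :: "'a set" and E :: "'a set set" and ord :: "'a \<Rightarrow> nat"
  assumes finite_V: "finite V" and finite_E: "finite E"
    and graph: "simple_graph V E"
    and inj_ord: "inj_on ord V"
begin

definition hi :: "'a set \<Rightarrow> 'a" where
  "hi e = (SOME v. v \<in> e \<and> (\<forall>w\<in>e. ord w \<le> ord v))"

definition lo :: "'a set \<Rightarrow> 'a" where
  "lo e = (SOME v. v \<in> e \<and> v \<noteq> hi e)"

lemma edge_lo_hi: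
  assumes "e \<in> E"
  shows "lo e \<in> V \<and> hi e \<in> V \<and> e = {lo e, hi e} \<and> ord (lo e) < ord (hi e)"
proof -
  obtain u v where uv: "u \<in> V" "v \<in> V" "ord u < ord v" "e = {u, v}"
  proof -
    obtain u v where "u \<in> V" "v \<in> V" "u \<noteq> v" "e = {u, v}"
      using simple_graph_edgeE[OF graph assms] .
    moreover from this have "ord u \<noteq> ord v" using inj_ord by (auto dest: inj_onD)
    ultimately show ?thesis using that by (metis insert_commute linorder_neqE_nat)
  qed
  have "hi e = v" unfolding hi_def using uv by (intro some_equality) auto
  moreover from this have "lo e = u" unfolding lo_def using uv by (intro some_equality) auto
  ultimately show ?thesis using uv by simp
qed

lemma edge_eqI:
  assumes "e \<in> E" "g \<in> E" "lo e = lo g" "hi e = hi g"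
  shows "e = g"
  using edge_lo_hi[OF assms(1)] edge_lo_hi[OF assms(2)] assms(3,4) by metis

lemma hi_eq_if_ord_eq:
  assumes "e \<in> E" "g \<in> E" "ord (hi e) = ord (hi g)"
  shows "hi e = hi g"
  using edge_lo_hi[OF assms(1)] edge_lo_hi[OF assms(2)] assms(3) inj_ord by (auto dest: inj_onD)

definition above :: "'a set \<Rightarrow> 'a set \<Rightarrow> bool" where
  "above j g \<longleftrightarrow> g \<in> E \<and> lo g = lo j \<and> ord (hi j) < ord (hi g)"

definition has_above :: "'a set \<Rightarrow> bool" where
  "has_above j \<longleftrightarrow> (\<exists>g. above j g)"

definition next_above :: "'a set \<Rightarrow> 'a set" where
  "next_above j = arg_min (\<lambda>g. ord (hi g)) (above j)"

lemma next_above_least: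
  assumes "has_above j"
  shows "above j (next_above j)" "above j g \<Longrightarrow> ord (hi (next_above j)) \<le> ord (hi g)"
  using assms arg_min_nat_lemma[of "above j" _ "\<lambda>g. ord (hi g)"]
  unfolding has_above_def next_above_def by blast+

lemma next_above_unique:
  assumes "j1 \<in> E" "j2 \<in> E" "has_above j1" "has_above j2" "next_above j1 = next_above j2"
  shows "j1 = j2"
proof -
  have lo: "lo j1 = lo j2" using next_above_least(1)[OF assms(3)] next_above_least(1)[OF assms(4)] assms(5)
    by (simp add: above_def)
  have "\<not> ord (hi j1) < ord (hi j2)" "\<not> ord (hi j2) < ord (hi j1)"
    using next_above_least[OF assms(3)] next_above_least[OF assms(4)] assms lo
    by (auto simp: above_def) (metis not_le)+
  then show ?thesis
    using edge_eqI[OF assms(1,2) lo] hi_eq_if_ord_eq[OF assms(1,2)] by simp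
qed

text \<open>The unknowns: \<open>Inl v\<close> is the weight of the vertex \<open>v\<close>, \<open>Inr e\<close> that of the edge \<open>e\<close>.\<close>
definition vars :: "('a + 'a set) set" where
  "vars = Inl ` V \<union> Inr ` E"

definition incid :: "'a + 'a set \<Rightarrow> 'a \<Rightarrow> real" where
  "incid z v = (case z of Inl w \<Rightarrow> if v = w then 1 else 0 | Inr g \<Rightarrow> if v \<in> g then 1 else 0)"

definition form :: "'a set \<Rightarrow> 'a + 'a set \<Rightarrow> real" where
  "form f z = incid z (hi f) - incid z (lo f)"

text \<open>The contributions at \<open>lo j\<close> then
  cancel, so that \<open>form f\<close> applied to column \<open>j\<close> vanishes whenever \<open>hi f\<close> is below \<open>hi j\<close>.\<close>
definition Lam :: "'a + 'a set \<Rightarrow> 'a set \<Rightarrow> real" where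
  "Lam z j = (case z of
      Inl w \<Rightarrow> if \<not> has_above j \<and> w = lo j then -1 else 0
    | Inr g \<Rightarrow> (if g = j then 1 else 0) - (if has_above j \<and> g = next_above j then 1 else 0))"

lemma finite_vars: "finite vars"
  using finite_V finite_E by (simp add: vars_def)

lemma sum_incid:
  assumes "v \<in> V"
  shows "(\<Sum>z\<in>vars. incid z v * h z) = h (Inl v) + (\<Sum>g\<in>{g\<in>E. v \<in> g}. h (Inr g))"
proof -
  have "(\<Sum>z\<in>vars. incid z v * h z)
      = (\<Sum>w\<in>V. incid (Inl w) v * h (Inl w)) + (\<Sum>g\<in>E. incid (Inr g) v * h (Inr g))"
    unfolding vars_def using finite_V finite_E
    by (subst sum.union_disjoint) (auto simp: sum.reindex)
  also have "(\<Sum>w\<in>V. incid (Inl w) v * h (Inl w)) = (\<Sum>w\<in>V. if v = w then h (Inl v) else 0)"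
    by (intro sum.cong) (auto simp: incid_def)
  also have "(\<Sum>g\<in>E. incid (Inr g) v * h (Inr g)) = (\<Sum>g\<in>E. if v \<in> g then h (Inr g) else 0)"
    by (intro sum.cong) (auto simp: incid_def)
  finally show ?thesis using assms finite_V finite_E by (simp add: sum.inter_filter)
qed

lemma sum_form_eq_wdeg_fin:
  assumes "f \<in> E" "\<And>v. v \<in> V \<Longrightarrow> x (Inl v) = real (wv v)" "\<And>e. e \<in> E \<Longrightarrow> x (Inr e) = real (we e)"
  shows "(\<Sum>z\<in>vars. form f z * x z) = real (wdeg_fin E wv we (hi f)) - real (wdeg_fin E wv we (lo f))"
proof -
  have "(\<Sum>z\<in>vars. incid z v * x z) = real (wdeg_fin E wv we v)" if "v \<in> V" for v
    using sum_incid[OF that] assms(2)[OF that] assms(3)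
    by (simp add: wdeg_fin_eq_sum_incident[OF graph] add.commute)
  with edge_lo_hi[OF assms(1)] show ?thesis
    by (simp add: form_def left_diff_distrib sum_subtractf)
qed

lemma sum_incid_Lam:
  assumes "v \<in> V" "j \<in> E"
  shows "(\<Sum>z\<in>vars. incid z v * Lam z j)
    = (if v = hi j then 1 else 0) - (if has_above j \<and> v = hi (next_above j) then 1 else 0)"
proof -
  have j: "v \<in> j \<longleftrightarrow> v = lo j \<or> v = hi j" "lo j \<noteq> hi j"
    using edge_lo_hi[OF assms(2)] by auto
  have fin: "finite {g\<in>E. v \<in> g}" using finite_E by simp
  have "(\<Sum>g\<in>{g\<in>E. v \<in> g}. if has_above j \<and> g = next_above j then 1 else 0)
      = (if has_above j \<and> v \<in> next_above j then 1 else (0::real))"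
    using fin next_above_least(1)[of j] by (cases "has_above j") (simp_all add: above_def)
  then have "(\<Sum>g\<in>{g\<in>E. v \<in> g}. Lam (Inr g) j)
      = (if v \<in> j then 1 else 0) - (if has_above j \<and> v \<in> next_above j then 1 else 0)"
    using fin assms(2) by (simp add: Lam_def sum_subtractf)
  moreover have "v \<in> next_above j \<longleftrightarrow> v = lo j \<or> v = hi (next_above j)"
    "lo j \<noteq> hi (next_above j)" if "has_above j"
    using edge_lo_hi[of "next_above j"] next_above_least(1)[OF that] by (auto simp: above_def)
  ultimately show ?thesis
    using sum_incid[OF assms(1)] j by (auto simp: Lam_def)
qed

lemma sum_form_Lam:
  assumes "f \<in> E" "j \<in> E"
  shows "ord (hi f) < ord (hi j) \<Longrightarrow> (\<Sum>z\<in>vars. form f z * Lam z j) = 0"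
    and "hi f = hi j \<Longrightarrow> (\<Sum>z\<in>vars. form f z * Lam z j) = 1"
proof -
  have f: "lo f \<in> V" "hi f \<in> V" "ord (lo f) < ord (hi f)" using edge_lo_hi[OF assms(1)] by auto
  have "has_above j \<Longrightarrow> ord (hi j) < ord (hi (next_above j))"
    using next_above_least(1) by (simp add: above_def)
  moreover have "(\<Sum>z\<in>vars. form f z * Lam z j)
      = (\<Sum>z\<in>vars. incid z (hi f) * Lam z j) - (\<Sum>z\<in>vars. incid z (lo f) * Lam z j)"
    by (simp add: form_def left_diff_distrib sum_subtractf)
  ultimately show "ord (hi f) < ord (hi j) \<Longrightarrow> (\<Sum>z\<in>vars. form f z * Lam z j) = 0"
    and "hi f = hi j \<Longrightarrow> (\<Sum>z\<in>vars. form f z * Lam z j) = 1"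
    using f sum_incid_Lam[OF _ assms(2)] by auto
qed

lemma prod_form_Lam_permutes:
  assumes \<pi>: "\<pi> permutes E"
  shows "(\<Prod>f\<in>E. \<Sum>z\<in>vars. form f z * Lam z (\<pi> f)) = (if \<forall>f\<in>E. hi (\<pi> f) = hi f then 1 else 0)"
proof (cases "\<exists>f\<in>E. ord (hi f) < ord (hi (\<pi> f))")
  case True
  then obtain f where f: "f \<in> E" "ord (hi f) < ord (hi (\<pi> f))" by blast
  then have "(\<Sum>z\<in>vars. form f z * Lam z (\<pi> f)) = 0"
    using sum_form_Lam(1) permutes_in_image[OF \<pi>] by simp
  with f finite_E show ?thesis by (auto intro: prod_zero)
next
  case False
  then have le: "ord (hi (\<pi> f)) \<le> ord (hi f)" if "f \<in> E" for f
    using that by (simp add: not_less)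
  have "(\<Sum>f\<in>E. ord (hi (\<pi> f))) = (\<Sum>f\<in>E. ord (hi f))"
    using sum.permute[OF \<pi>, of "\<lambda>f. ord (hi f)"] by (simp add: o_def)
  then have "ord (hi (\<pi> f)) = ord (hi f)" if "f \<in> E" for f
    using sum_mono_inv[of "\<lambda>f. ord (hi (\<pi> f))" E "\<lambda>f. ord (hi f)"] le finite_E that by blast
  then have hi: "hi (\<pi> f) = hi f" if "f \<in> E" for f
    using hi_eq_if_ord_eq permutes_in_image[OF \<pi>] that by blast
  then have "(\<Prod>f\<in>E. \<Sum>z\<in>vars. form f z * Lam z (\<pi> f)) = 1"
    using sum_form_Lam(2) permutes_in_image[OF \<pi>] by (intro prod.neutral) auto
  with hi show ?thesis by simp
qed

lemma permanent_form_Lam_ge_1: "permanent E (\<lambda>f j. \<Sum>z\<in>vars. form f z * Lam z j) \<ge> 1"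
proof -
  have "1 = (\<Prod>f\<in>E. \<Sum>z\<in>vars. form f z * Lam z (id f))"
    using prod_form_Lam_permutes[OF permutes_id] by simp
  also have "\<dots> \<le> permanent E (\<lambda>f j. \<Sum>z\<in>vars. form f z * Lam z j)"
    unfolding permanent_def
  proof (rule member_le_sum)
    show "id \<in> {\<pi>. \<pi> permutes E}" by (simp add: permutes_id)
    show "finite {\<pi>. \<pi> permutes E}" using finite_E by (simp add: finite_permutations)
  qed (simp add: prod_form_Lam_permutes)
  finally show ?thesis .
qed

lemma top_edge_unique:
  assumes "j1 \<in> E" "j2 \<in> E" "\<not> has_above j1" "\<not> has_above j2" "lo j1 = lo j2"
  shows "j1 = j2"
proof -
  have "\<not> ord (hi j1) < ord (hi j2)" "\<not> ord (hi j2) < ord (hi j1)"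
    using assms by (auto simp: has_above_def above_def)
  then show ?thesis using edge_eqI[OF assms(1,2,5)] hi_eq_if_ord_eq[OF assms(1,2)] by simp
qed

lemma card_Lam_Inl_support: "card {j\<in>E. Lam (Inl w) j \<noteq> 0} \<le> 1"
  using finite_E top_edge_unique unfolding One_nat_def
  by (subst card_le_Suc0_iff_eq) (auto simp: Lam_def split: if_splits)

lemma card_Lam_Inr_support: "card {j\<in>E. Lam (Inr g) j \<noteq> 0} \<le> 2"
proof -
  let ?B = "{j\<in>E. has_above j \<and> next_above j = g}"
  have "{j\<in>E. Lam (Inr g) j \<noteq> 0} \<subseteq> insert g ?B"
    by (auto simp: Lam_def split: if_splits)
  then have "card {j\<in>E. Lam (Inr g) j \<noteq> 0} \<le> card (insert g ?B)"
    using finite_E by (intro card_mono) auto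
  also have "\<dots> \<le> Suc (card ?B)"
    using finite_E by (simp add: card_insert_if)
  also have "card ?B \<le> 1"
    using finite_E next_above_unique unfolding One_nat_def by (subst card_le_Suc0_iff_eq) auto
  finally show ?thesis by simp
qed

text \<open>Lists of sizes 2 and 3 exceed the row supports, of sizes 1 and 2, of \<open>Lam\<close>.\<close>
lemma exists_nonvanishing_point:
  assumes "\<And>v. v \<in> V \<Longrightarrow> finite (L (Inl v)) \<and> 2 \<le> card (L (Inl v))"
    and "\<And>e. e \<in> E \<Longrightarrow> finite (L (Inr e)) \<and> 3 \<le> card (L (Inr e))"
  shows "\<exists>x\<in>PiE vars L. (\<Prod>f\<in>E. \<Sum>z\<in>vars. form f z * x z) \<noteq> 0"
proof (rule ccontr)
  assume "\<not> ?thesis"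
  moreover have "finite (L z) \<and> card {j\<in>E. Lam z j \<noteq> 0} < card (L z)" if "z \<in> vars" for z
  proof -
    from that consider v where "v \<in> V" "z = Inl v" | e where "e \<in> E" "z = Inr e"
      unfolding vars_def by blast
    then show ?thesis
    proof cases
      case (1 v)
      with assms(1)[of v] card_Lam_Inl_support[of v] show ?thesis by simp
    next
      case (2 e)
      with assms(2)[of e] card_Lam_Inr_support[of e] show ?thesis by simp
    qed
  qed
  ultimately have "permanent E (\<lambda>f j. \<Sum>z\<in>vars. form f z * Lam z j) = 0"
    using permanent_eq_0_if_vanishes_on_grid[OF finite_E finite_vars] by blast
  with permanent_form_Lam_ge_1 show False by simp
qed

end

lemma finite_graph_weighting:
  assumes graph: "simple_graph V E" and "finite V"
    and Lv: "\<And>v. v \<in> V \<Longrightarrow> 2 \<le> card (Lv v)"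
    and Le: "\<And>e. e \<in> E \<Longrightarrow> 3 \<le> card (Le e)"
  shows "\<exists>wv we. (\<forall>v\<in>V. wv v \<in> Lv v) \<and> (\<forall>e\<in>E. we e \<in> Le e) \<and>
    (\<forall>u v. {u, v} \<in> E \<longrightarrow> wdeg_fin E wv we u \<noteq> wdeg_fin E wv we v)"
proof -
  have "E \<subseteq> Pow V" using graph by (auto elim: simple_graph_edgeE)
  with \<open>finite V\<close> have "finite E" by (meson finite_Pow_iff finite_subset)
  obtain ord :: "'a \<Rightarrow> nat" and n where "ord ` V = {i. i < n}" "inj_on ord V"
    using finite_imp_inj_to_nat_seg[OF \<open>finite V\<close>] by blast
  with \<open>finite V\<close> \<open>finite E\<close> graph interpret G: ordered_graph V E ord
    by unfold_locales auto
  let ?L = "case_sum (\<lambda>v. real ` Lv v) (\<lambda>e. real ` Le e)"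
  have "finite (Lv v)" if "v \<in> V" for v using Lv[OF that] card.infinite by fastforce
  moreover have "finite (Le e)" if "e \<in> E" for e using Le[OF that] card.infinite by fastforce
  ultimately obtain x where x: "x \<in> PiE G.vars ?L"
    and nz: "(\<Prod>f\<in>E. \<Sum>z\<in>G.vars. G.form f z * x z) \<noteq> 0"
    using G.exists_nonvanishing_point[of ?L] Lv Le by (auto simp: card_image)
  define wv where "wv v = nat \<lfloor>x (Inl v)\<rfloor>" for v
  define we where "we e = nat \<lfloor>x (Inr e)\<rfloor>" for e
  have wv: "x (Inl v) = real (wv v) \<and> wv v \<in> Lv v" if "v \<in> V" for v
    using PiE_mem[OF x, of "Inl v"] that by (auto simp: wv_def G.vars_def)
  have we: "x (Inr e) = real (we e) \<and> we e \<in> Le e" if "e \<in> E" for e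
    using PiE_mem[OF x, of "Inr e"] that by (auto simp: we_def G.vars_def)
  have "wdeg_fin E wv we u \<noteq> wdeg_fin E wv we v" if "{u, v} \<in> E" for u v
  proof -
    from nz that have "(\<Sum>z\<in>G.vars. G.form {u, v} z * x z) \<noteq> 0"
      using \<open>finite E\<close> by (auto simp: prod_zero_iff)
    with G.sum_form_eq_wdeg_fin[OF that] wv we
    have "wdeg_fin E wv we (G.hi {u, v}) \<noteq> wdeg_fin E wv we (G.lo {u, v})"
      by simp
    moreover have "{u, v} = {G.lo {u, v}, G.hi {u, v}}" using G.edge_lo_hi[OF that] by blast
    ultimately show ?thesis by (auto simp: doubleton_eq_iff)
  qed
  with wv we show ?thesis by blast
qed

section \<open>Compactness\<close>

text \<open>Such a set is a finite union of closed cylinders.\<close>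
lemma closedin_finitely_determined:
  assumes finD: "\<And>z. z \<in> I \<Longrightarrow> finite (D z)" and J: "finite J" "J \<subseteq> I"
    and local: "\<And>x y. (\<And>z. z \<in> J \<Longrightarrow> x z = y z) \<Longrightarrow> Q x = Q y"
  shows "closedin (product_topology (\<lambda>z. discrete_topology (D z)) I) {x \<in> PiE I D. Q x}"
proof -
  define X where "X = product_topology (\<lambda>z. discrete_topology (D z)) I"
  have top: "topspace X = PiE I D" by (simp add: X_def)
  have cylinder: "closedin X {x \<in> topspace X. x z = b}" if "z \<in> I" for z b
  proof -
    have "closedin X {x \<in> topspace X. x z \<in> {b} \<inter> D z}"
      by (rule closedin_continuous_map_preimage[where Y = "discrete_topology (D z)"])
         (auto simp: X_def intro: continuous_map_product_projection that)
    moreover have "{x \<in> topspace X. x z \<in> {b} \<inter> D z} = {x \<in> topspace X. x z = b}"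
      using that top by auto
    ultimately show ?thesis by simp
  qed
  define A where "A = (\<lambda>x. restrict x J) ` {x \<in> PiE I D. Q x}"
  define Cyl where "Cyl a = \<Inter> (insert (topspace X) ((\<lambda>z. {x \<in> topspace X. x z = a z}) ` J))" for a
  have "A \<subseteq> PiE J D" using J(2) by (auto simp: A_def)
  moreover have "finite (PiE J D)" using J finD by (intro finite_PiE) auto
  ultimately have "finite A" by (rule finite_subset)
  moreover have "closedin X (Cyl a)" for a
    unfolding Cyl_def using cylinder J by (intro closedin_Inter) auto
  moreover have "{x \<in> PiE I D. Q x} = (\<Union>a\<in>A. Cyl a)"
  proof (intro set_eqI iffI)
    fix x assume "x \<in> {x \<in> PiE I D. Q x}"
    then show "x \<in> (\<Union>a\<in>A. Cyl a)"
      unfolding A_def Cyl_def top by (intro UN_I[of "restrict x J"]) auto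
  next
    fix x assume "x \<in> (\<Union>a\<in>A. Cyl a)"
    then obtain y where "y \<in> PiE I D" "Q y" "x \<in> Cyl (restrict y J)" unfolding A_def by blast
    then show "x \<in> {x \<in> PiE I D. Q x}"
      using local[of x y] unfolding Cyl_def top by auto
  qed
  ultimately show ?thesis unfolding X_def[symmetric] by (auto intro: closedin_Union)
qed

text \<open>Compactness of the Tychonoff product of the finite discrete spaces \<open>D z\<close>.\<close>
lemma finitely_satisfiable_imp_satisfiable:
  assumes finD: "\<And>z. z \<in> I \<Longrightarrow> finite (D z)"
    and J: "\<And>c. c \<in> C \<Longrightarrow> finite (J c) \<and> J c \<subseteq> I"
    and local: "\<And>c x y. c \<in> C \<Longrightarrow> (\<And>z. z \<in> J c \<Longrightarrow> x z = y z) \<Longrightarrow> P c x = P c y"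
    and sat: "\<And>F. finite F \<Longrightarrow> F \<subseteq> C \<Longrightarrow> \<exists>x\<in>PiE I D. \<forall>c\<in>F. P c x"
  shows "\<exists>x\<in>PiE I D. \<forall>c\<in>C. P c x"
proof -
  define X where "X = product_topology (\<lambda>z. discrete_topology (D z)) I"
  define K where "K c = {x \<in> topspace X. P c x}" for c
  have top: "topspace X = PiE I D" by (simp add: X_def)
  have compact: "compact_space X"
    unfolding X_def compact_space_product_topology using finD
    by (simp add: compact_space_discrete_topology)
  have closed: "closedin X (K c)" if c: "c \<in> C" for c
    unfolding K_def top unfolding X_def
    by (rule closedin_finitely_determined[OF finD J[OF c, THEN conjunct1] J[OF c, THEN conjunct2]
          local[OF c]])
  let ?U = "insert (topspace X) (K ` C)"
  have "\<Inter> ?U \<noteq> {}"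
  proof (rule compact_space_fip[THEN iffD1, OF compact, rule_format], intro conjI allI impI ballI)
    fix S assume "S \<in> ?U"
    then show "closedin X S" using closed by auto
  next
    fix F assume F: "finite F \<and> F \<subseteq> ?U"
    have fin: "finite (F - {topspace X})" using F by simp
    have sub: "F - {topspace X} \<subseteq> K ` C" using F by blast
    obtain F' where F': "F' \<subseteq> C" "finite F'" "F - {topspace X} = K ` F'"
      using finite_subset_image[OF fin sub] by blast
    obtain x where x: "x \<in> PiE I D" "\<forall>c\<in>F'. P c x" using sat[OF F'(2,1)] by blast
    have "x \<in> S" if S: "S \<in> F" for S
    proof (cases "S = topspace X")
      case True
      with x top show ?thesis by simp
    next
      case False
      with S F'(3) obtain c where "c \<in> F'" "S = K c" by blast
      with x top show ?thesis unfolding K_def by simp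
    qed
    then show "\<Inter> F \<noteq> {}" by blast
  qed
  then obtain x where "x \<in> topspace X" "\<And>c. c \<in> C \<Longrightarrow> x \<in> K c" by blast
  with top show ?thesis unfolding K_def by blast
qed

section \<open>Infinite graphs\<close>

lemma wdeg_fin_cong:
  assumes "nbhd E u = nbhd E' u" "wv u = wv' u" "\<And>w. w \<in> nbhd E u \<Longrightarrow> we {u, w} = we' {u, w}"
  shows "wdeg_fin E wv we u = wdeg_fin E' wv' we' u"
  using assms unfolding wdeg_fin_def by (metis (no_types, lifting) sum.cong)

lemma wdeg_differ_if_finite:
  assumes "finite (nbhd E u) \<Longrightarrow> finite (nbhd E v) \<Longrightarrow> wdeg_fin E wv we u \<noteq> wdeg_fin E wv we v"
  shows "wdeg_differ E wv we u v \<or> same_infinite_degree E u v"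
  using assms by (auto simp: wdeg_differ_def same_infinite_degree_def)

lemma incident_subgraph:
  assumes graph: "simple_graph V E" and S: "finite S" "\<And>s. s \<in> S \<Longrightarrow> finite (nbhd E s)"
  defines "E0 \<equiv> {e\<in>E. \<exists>s\<in>S. s \<in> e}"
  shows "simple_graph (\<Union> E0) E0" "finite (\<Union> E0)" "\<Union> E0 \<subseteq> V"
proof -
  show "simple_graph (\<Union> E0) E0"
    unfolding simple_graph_def
  proof
    fix e assume e: "e \<in> E0"
    then have "e \<in> E" by (simp add: E0_def)
    then obtain u v where uv: "u \<noteq> v" "e = {u, v}" using simple_graph_edgeE[OF graph] by metis
    with e show "\<exists>u v. u \<in> \<Union> E0 \<and> v \<in> \<Union> E0 \<and> u \<noteq> v \<and> e = {u, v}" by blast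
  qed
  have "E0 = (\<Union>s\<in>S. {e\<in>E. s \<in> e})" by (auto simp: E0_def)
  then have "finite E0"
    using S by (auto intro!: finite_UN_I finite_incident_edges[OF graph])
  moreover have "finite e" if "e \<in> E0" for e
    using that graph by (auto simp: E0_def elim: simple_graph_edgeE)
  ultimately show "finite (\<Union> E0)" by simp
  show "\<Union> E0 \<subseteq> V"
    using graph by (auto simp: E0_def elim: simple_graph_edgeE)
qed

text \<open>The finite subgraph of all edges at vertices of \<open>S\<close> contains every edge that enters the
  weighted degrees of these vertices; outside it, the weights are arbitrary list elements.\<close>
lemma finite_vertex_set_weighting:
  assumes graph: "simple_graph V E"
    and Lv: "\<And>v. v \<in> V \<Longrightarrow> 2 \<le> card (Lv v)" and Le: "\<And>e. e \<in> E \<Longrightarrow> 3 \<le> card (Le e)"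
    and S: "finite S" "\<And>s. s \<in> S \<Longrightarrow> finite (nbhd E s)"
  shows "\<exists>wv we. (\<forall>v\<in>V. wv v \<in> Lv v) \<and> (\<forall>e\<in>E. we e \<in> Le e) \<and>
    (\<forall>u\<in>S. \<forall>v\<in>S. {u, v} \<in> E \<longrightarrow> wdeg_fin E wv we u \<noteq> wdeg_fin E wv we v)"
proof -
  define E0 where "E0 = {e\<in>E. \<exists>s\<in>S. s \<in> e}"
  define V0 where "V0 = \<Union> E0"
  have sub: "simple_graph V0 E0" "finite V0" "V0 \<subseteq> V"
    using incident_subgraph[OF graph S] by (simp_all add: V0_def E0_def)
  have "\<And>v. v \<in> V0 \<Longrightarrow> 2 \<le> card (Lv v)" "\<And>e. e \<in> E0 \<Longrightarrow> 3 \<le> card (Le e)"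
    using Lv Le sub(3) by (auto simp: E0_def)
  then obtain wv0 we0 where w0: "\<forall>v\<in>V0. wv0 v \<in> Lv v" "\<forall>e\<in>E0. we0 e \<in> Le e"
      "\<And>u v. {u, v} \<in> E0 \<Longrightarrow> wdeg_fin E0 wv0 we0 u \<noteq> wdeg_fin E0 wv0 we0 v"
    using finite_graph_weighting[OF sub(1,2)] by blast
  have "\<forall>v\<in>V. \<exists>a. a \<in> Lv v" "\<forall>e\<in>E. \<exists>a. a \<in> Le e"
    using Lv Le by (metis card.empty ex_in_conv not_numeral_le_zero)+
  then obtain dv de where d: "\<forall>v\<in>V. dv v \<in> Lv v" "\<forall>e\<in>E. de e \<in> Le e" by metis
  define wv where "wv v = (if v \<in> V0 then wv0 v else dv v)" for v
  define we where "we e = (if e \<in> E0 then we0 e else de e)" for e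
  have "wdeg_fin E wv we s = wdeg_fin E0 wv0 we0 s" if "s \<in> S" "s \<in> V0" for s
  proof (rule wdeg_fin_cong)
    show "nbhd E s = nbhd E0 s" using that by (auto simp: nbhd_def E0_def)
    show "wv s = wv0 s" using that by (simp add: wv_def)
    show "we {s, w} = we0 {s, w}" if "w \<in> nbhd E s" for w
      using that \<open>s \<in> S\<close> by (auto simp: we_def nbhd_def E0_def)
  qed
  moreover have "{u, v} \<in> E0" "u \<in> V0" "v \<in> V0" if "u \<in> S" "{u, v} \<in> E" for u v
    using that by (auto simp: E0_def V0_def)
  ultimately have "\<forall>u\<in>S. \<forall>v\<in>S. {u, v} \<in> E \<longrightarrow> wdeg_fin E wv we u \<noteq> wdeg_fin E wv we v"
    using w0(3) by (metis insert_commute)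
  moreover have "\<forall>v\<in>V. wv v \<in> Lv v" "\<forall>e\<in>E. we e \<in> Le e"
    using w0 d by (auto simp: wv_def we_def)
  ultimately show ?thesis by blast
qed

definition star :: "'a set set \<Rightarrow> 'a \<Rightarrow> ('a + 'a set) set" where
  "star E u = insert (Inl u) ((\<lambda>w. Inr {u, w}) ` nbhd E u)"

lemma wdeg_fin_eq_if_agree_on_star:
  assumes "\<And>z. z \<in> star E u \<Longrightarrow> x z = y z"
  shows "wdeg_fin E (x \<circ> Inl) (x \<circ> Inr) u = wdeg_fin E (y \<circ> Inl) (y \<circ> Inr) u"
  using assms by (intro wdeg_fin_cong) (auto simp: star_def)

lemma finite_star_subset:
  assumes "simple_graph V E" "{u, v} \<in> E" "finite (nbhd E u)" "finite (nbhd E v)"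
  shows "finite (star E u \<union> star E v) \<and> star E u \<union> star E v \<subseteq> Inl ` V \<union> Inr ` E"
  using assms simple_graph_edgeD[OF assms(1,2)]
  by (auto simp: star_def nbhd_def insert_commute)

lemma finite_constraints_satisfiable:
  assumes graph: "simple_graph V E"
    and Lv: "\<And>v. v \<in> V \<Longrightarrow> 2 \<le> card (Lv v)" and Le: "\<And>e. e \<in> E \<Longrightarrow> 3 \<le> card (Le e)"
    and "finite F"
    and F: "\<And>u v. (u, v) \<in> F \<Longrightarrow> {u, v} \<in> E \<and> finite (nbhd E u) \<and> finite (nbhd E v)"
  shows "\<exists>x\<in>PiE (Inl ` V \<union> Inr ` E) (case_sum Lv Le). \<forall>(u, v)\<in>F.
    wdeg_fin E (x \<circ> Inl) (x \<circ> Inr) u \<noteq> wdeg_fin E (x \<circ> Inl) (x \<circ> Inr) v"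
proof -
  define S where "S = fst ` F \<union> snd ` F"
  have S: "finite S" "\<And>s. s \<in> S \<Longrightarrow> finite (nbhd E s)"
    using \<open>finite F\<close> F by (force simp: S_def)+
  obtain wv we where w: "\<forall>v\<in>V. wv v \<in> Lv v" "\<forall>e\<in>E. we e \<in> Le e"
      "\<forall>u\<in>S. \<forall>v\<in>S. {u, v} \<in> E \<longrightarrow> wdeg_fin E wv we u \<noteq> wdeg_fin E wv we v"
    using finite_vertex_set_weighting[where Lv = Lv and Le = Le, OF graph Lv Le S] by blast
  define x where "x = restrict (case_sum wv we) (Inl ` V \<union> Inr ` E)"
  have "wdeg_fin E (x \<circ> Inl) (x \<circ> Inr) u = wdeg_fin E wv we u" if "u \<in> V" for u
    using that by (intro wdeg_fin_cong) (auto simp: x_def nbhd_def)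
  moreover have "u \<in> S" "v \<in> S" "u \<in> V" "v \<in> V" if "(u, v) \<in> F" for u v
    using that F[OF that] simple_graph_edgeD[OF graph] by (force simp: S_def)+
  ultimately have "\<forall>(u, v)\<in>F. wdeg_fin E (x \<circ> Inl) (x \<circ> Inr) u \<noteq> wdeg_fin E (x \<circ> Inl) (x \<circ> Inr) v"
    using w(3) F by auto
  moreover have "x \<in> PiE (Inl ` V \<union> Inr ` E) (case_sum Lv Le)"
    using w by (auto simp: x_def restrict_PiE_iff)
  ultimately show ?thesis by blast
qed

lemma weighting_proper_at_finite_degree_edges:
  assumes graph: "simple_graph V E"
    and Lv: "\<And>v. v \<in> V \<Longrightarrow> 2 \<le> card (Lv v)" and Le: "\<And>e. e \<in> E \<Longrightarrow> 3 \<le> card (Le e)"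
  shows "\<exists>wv we. (\<forall>v\<in>V. wv v \<in> Lv v) \<and> (\<forall>e\<in>E. we e \<in> Le e) \<and>
    (\<forall>u v. {u, v} \<in> E \<longrightarrow> finite (nbhd E u) \<longrightarrow> finite (nbhd E v) \<longrightarrow>
      wdeg_fin E wv we u \<noteq> wdeg_fin E wv we v)"
proof -
  define I where "I = Inl ` V \<union> Inr ` E"
  define C where "C = {(u, v). {u, v} \<in> E \<and> finite (nbhd E u) \<and> finite (nbhd E v)}"
  define P where "P c x \<longleftrightarrow>
    wdeg_fin E (x \<circ> Inl) (x \<circ> Inr) (fst c) \<noteq> wdeg_fin E (x \<circ> Inl) (x \<circ> Inr) (snd c)" for c x
  have "\<exists>x\<in>PiE I (case_sum Lv Le). \<forall>c\<in>C. P c x"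
  proof (rule finitely_satisfiable_imp_satisfiable[where J = "\<lambda>c. star E (fst c) \<union> star E (snd c)"])
    show "finite (case_sum Lv Le z)" if "z \<in> I" for z
      using that by (auto simp: I_def intro!: card_ge_0_finite dest!: Lv Le)
    show "finite (star E (fst c) \<union> star E (snd c)) \<and> star E (fst c) \<union> star E (snd c) \<subseteq> I"
      if c: "c \<in> C" for c
    proof -
      obtain u v where uv: "c = (u, v)" "{u, v} \<in> E" "finite (nbhd E u)" "finite (nbhd E v)"
        using c by (cases c) (auto simp: C_def)
      then show ?thesis using finite_star_subset[OF graph uv(2-4)] unfolding I_def by simp
    qed
    show "P c x = P c y" if xy: "\<And>z. z \<in> star E (fst c) \<union> star E (snd c) \<Longrightarrow> x z = y z" for c x y
    proof -
      have "wdeg_fin E (x \<circ> Inl) (x \<circ> Inr) u = wdeg_fin E (y \<circ> Inl) (y \<circ> Inr) u"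
        if "u = fst c \<or> u = snd c" for u
        using that xy by (intro wdeg_fin_eq_if_agree_on_star) blast
      then show ?thesis by (simp add: P_def)
    qed
    show "\<exists>x\<in>PiE I (case_sum Lv Le). \<forall>c\<in>F. P c x" if F: "finite F" "F \<subseteq> C" for F
    proof -
      have "{u, v} \<in> E \<and> finite (nbhd E u) \<and> finite (nbhd E v)" if "(u, v) \<in> F" for u v
        using that F(2) by (auto simp: C_def)
      from finite_constraints_satisfiable[where Lv = Lv and Le = Le, OF graph Lv Le F(1) this]
      show ?thesis by (auto simp: I_def P_def split_beta)
    qed
  qed
  then obtain x where x: "x \<in> PiE I (case_sum Lv Le)" "\<forall>c\<in>C. P c x" by blast
  have "(x \<circ> Inl) v \<in> Lv v" if "v \<in> V" for v
    using PiE_mem[OF x(1), of "Inl v"] that by (simp add: I_def)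
  moreover have "(x \<circ> Inr) e \<in> Le e" if "e \<in> E" for e
    using PiE_mem[OF x(1), of "Inr e"] that by (simp add: I_def)
  moreover have "wdeg_fin E (x \<circ> Inl) (x \<circ> Inr) u \<noteq> wdeg_fin E (x \<circ> Inl) (x \<circ> Inr) v"
    if "{u, v} \<in> E" "finite (nbhd E u)" "finite (nbhd E v)" for u v
    using x(2) that by (auto simp: C_def P_def)
  ultimately show ?thesis by blast
qed

theorem theorem4:
  fixes V :: "'a set" and E :: "'a set set"
    and Lv :: "'a \<Rightarrow> nat set" and Le :: "'a set \<Rightarrow> nat set"
  assumes "simple_graph V E"
    and "\<forall>v\<in>V. finite (Lv v) \<and> (\<forall>x\<in>Lv v. 0 < x) \<and> card (Lv v) \<ge> 2"
    and "\<forall>e\<in>E. finite (Le e) \<and> (\<forall>x\<in>Le e. 0 < x) \<and> card (Le e) \<ge> 3"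
  shows "\<exists>wv we. is_L_weighting V E Lv Le wv we"
proof -
  have "\<And>v. v \<in> V \<Longrightarrow> 2 \<le> card (Lv v)" "\<And>e. e \<in> E \<Longrightarrow> 3 \<le> card (Le e)"
    using assms(2,3) by auto
  then obtain wv we where lists: "\<forall>v\<in>V. wv v \<in> Lv v" "\<forall>e\<in>E. we e \<in> Le e"
    and proper: "\<And>u v. {u, v} \<in> E \<Longrightarrow> finite (nbhd E u) \<Longrightarrow> finite (nbhd E v) \<Longrightarrow>
      wdeg_fin E wv we u \<noteq> wdeg_fin E wv we v"
    using weighting_proper_at_finite_degree_edges[OF assms(1)] by blast
  have "wdeg_differ E wv we u v \<or> same_infinite_degree E u v" if "{u, v} \<in> E" for u v
    using proper[OF that] by (rule wdeg_differ_if_finite)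
  with lists have "is_L_weighting V E Lv Le wv we"
    unfolding is_L_weighting_def by blast
  then show ?thesis by blast
qed

end
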